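(* Let $(X,\mathcal{X},\mu)$ be a probability space, let $(Y,\mathcal{Y})$ be a measurable space, and let $f\colon X\to Y$ be a measurable function with output probability measure $\mu_f\colon\mathcal{Y}\to[0,1]$, $\mu_f=\mu\circ\mathit{pre}_f$. Let $\mathit{img}^\sharp_f\colon\wp(X)\to\wp(Y)$ be a function with $\mathit{img}_f(S)\subseteq\mathit{img}^\sharp_f(S)$ for all $S\subseteq X$, let $T$ be a finite partition of $X$, and let $\uparrow\colon\wp(X)\to\mathcal{X}$ be a monotone abstraction. For $A\subseteq Y$ define $$\mathit{pre}'^\sharp_f[T](A)\;=\;\uparrow\Big(\bigcup\{t\in T\mid \mathit{img}^\sharp_f(t)\cap A\neq\emptyset\}\Big),\qquad \mathit{pre}'^\flat_f[T](A)\;=\;X\setminus \mathit{pre}'^\sharp_f[T](Y\setminus A),$$ and $\mu^\sharp_f=\mu\circ\mathit{pre}'^\sharp_f[T]$, $\mu^\flat_f=\mu\circ\mathit{pre}'^\flat_f[T]$. Then for all $A\in\mathcal{Y}$: (i) $\mu^\flat_f(A)\le\mu_f(A)\le\mu^\sharp_f(A)$; (ii) $\mu^\flat_f(A)=1-\mu^\sharp_f(Y\setminus A)$; and (iii) $\mu^\flat_f$ and $\mu^\sharp_f$ are monotone (i.e. $A\subseteq B$ implies $\mu^\flat_f(A)\le\mu^\flat_f(B)$ and $\mu^\sharp_f(A)\le\mu^\sharp_f(B)$).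
   Context: For a function $f\colon X\to Y$: the pre-image function is $\mathit{pre}_f(B)=\{x\in X\mid f(x)\in B\}$ for $B\subseteq Y$, and the image function is $\mathit{img}_f(S)=\{f(x)\mid x\in S\}$ for $S\subseteq X$. $f$ is measurable from $(X,\mathcal{X})$ to $(Y,\mathcal{Y})$ if $\mathit{pre}_f(B)\in\mathcal{X}$ for every $B\in\mathcal{Y}$. A partition of $X$ is a set of nonempty pairwise disjoint subsets of $X$ whose union is $X$. An abstraction is a function $\uparrow\colon\wp(X)\to\mathcal{X}$ with $S\subseteq\,\uparrow(S)$ for all $S\subseteq X$; it is monotone if $S\subseteq S'$ implies $\uparrow(S)\subseteq\,\uparrow(S')$. *)

theory Defs
  imports "HOL-Probability.Probability"
begin

definition is_partition :: "'a set \<Rightarrow> 'a set set \<Rightarrow> bool" where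
  "is_partition X T \<longleftrightarrow> (\<forall>t\<in>T. t \<noteq> {}) \<and> pairwise disjnt T \<and> \<Union>T = X"

definition is_abstraction :: "'a measure \<Rightarrow> ('a set \<Rightarrow> 'a set) \<Rightarrow> bool" where
  "is_abstraction M up \<longleftrightarrow> (\<forall>S. S \<subseteq> space M \<longrightarrow> up S \<in> sets M \<and> S \<subseteq> up S)"

definition mono_abstraction :: "'a measure \<Rightarrow> ('a set \<Rightarrow> 'a set) \<Rightarrow> bool" where
  "mono_abstraction M up \<longleftrightarrow>
     (\<forall>S S'. S \<subseteq> S' \<and> S' \<subseteq> space M \<longrightarrow> up S \<subseteq> up S')"

definition pre_sharp :: "('a set \<Rightarrow> 'a set) \<Rightarrow> ('a set \<Rightarrow> 'b set) \<Rightarrow> 'a set set \<Rightarrow> 'b set \<Rightarrow> 'a set" where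
  "pre_sharp up img T A = up (\<Union>{t\<in>T. img t \<inter> A \<noteq> {}})"

definition pre_flat :: "'a measure \<Rightarrow> 'b measure \<Rightarrow> ('a set \<Rightarrow> 'a set) \<Rightarrow> ('a set \<Rightarrow> 'b set) \<Rightarrow> 'a set set \<Rightarrow> 'b set \<Rightarrow> 'a set" where
  "pre_flat M N up img T A = space M - pre_sharp up img T (space N - A)"

definition mu_sharp :: "'a measure \<Rightarrow> ('a set \<Rightarrow> 'a set) \<Rightarrow> ('a set \<Rightarrow> 'b set) \<Rightarrow> 'a set set \<Rightarrow> 'b set \<Rightarrow> real" where
  "mu_sharp M up img T A = measure M (pre_sharp up img T A)"

definition mu_flat :: "'a measure \<Rightarrow> 'b measure \<Rightarrow> ('a set \<Rightarrow> 'a set) \<Rightarrow> ('a set \<Rightarrow> 'b set) \<Rightarrow> 'a set set \<Rightarrow> 'b set \<Rightarrow> real" where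
  "mu_flat M N up img T A = measure M (pre_flat M N up img T A)"

definition mu_out :: "'a measure \<Rightarrow> ('a \<Rightarrow> 'b) \<Rightarrow> 'b set \<Rightarrow> real" where
  "mu_out M f B = measure M {x \<in> space M. f x \<in> B}"

end

theory Submission
  imports Defs
begin

text \<open>Every point x lies in some part t with f x \<in> img t, so the preimage of A is contained in
  pre_sharp A, and dually pre_flat A is contained in it; the remaining claims follow from
  monotonicity of the abstraction and of the measure, and from complementation in a probability
  space.\<close>

lemma
  assumes "is_abstraction M up" and "\<Union>T \<subseteq> space M"
  shows pre_sharp_in_sets: "pre_sharp up img T A \<in> sets M"
    and Union_meeting_subset_pre_sharp: "\<Union>{t\<in>T. img t \<inter> A \<noteq> {}} \<subseteq> pre_sharp up img T A"
proof -
  have "\<Union>{t\<in>T. img t \<inter> A \<noteq> {}} \<subseteq> space M"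
    using assms(2) by blast
  then show "pre_sharp up img T A \<in> sets M" "\<Union>{t\<in>T. img t \<inter> A \<noteq> {}} \<subseteq> pre_sharp up img T A"
    using assms(1) unfolding is_abstraction_def pre_sharp_def by simp_all
qed

lemma pre_flat_in_sets:
  assumes "is_abstraction M up" and "\<Union>T \<subseteq> space M"
  shows "pre_flat M N up img T A \<in> sets M"
  unfolding pre_flat_def using pre_sharp_in_sets[OF assms] by blast

lemma pre_sharp_mono:
  assumes "mono_abstraction M up" and "\<Union>T \<subseteq> space M" and "A \<subseteq> B"
  shows "pre_sharp up img T A \<subseteq> pre_sharp up img T B"
proof -
  have "\<Union>{t\<in>T. img t \<inter> A \<noteq> {}} \<subseteq> \<Union>{t\<in>T. img t \<inter> B \<noteq> {}}"
    using \<open>A \<subseteq> B\<close> by blast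
  moreover have "\<Union>{t\<in>T. img t \<inter> B \<noteq> {}} \<subseteq> space M"
    using assms(2) by blast
  ultimately show ?thesis
    using assms(1) unfolding mono_abstraction_def pre_sharp_def by simp
qed

lemma pre_flat_mono:
  assumes "mono_abstraction M up" and "\<Union>T \<subseteq> space M" and "A \<subseteq> B"
  shows "pre_flat M N up img T A \<subseteq> pre_flat M N up img T B"
proof -
  have "pre_sharp up img T (space N - B) \<subseteq> pre_sharp up img T (space N - A)"
    using assms by (intro pre_sharp_mono) blast+
  then show ?thesis unfolding pre_flat_def by blast
qed

lemma vimage_subset_pre_sharp:
  assumes "is_abstraction M up" and "\<Union>T = space M" and "\<forall>t\<in>T. f ` t \<subseteq> img t"
  shows "{x \<in> space M. f x \<in> A} \<subseteq> pre_sharp up img T A"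
proof -
  have "{x \<in> space M. f x \<in> A} \<subseteq> \<Union>{t\<in>T. img t \<inter> A \<noteq> {}}"
  proof
    fix x assume x: "x \<in> {x \<in> space M. f x \<in> A}"
    then obtain t where "t \<in> T" "x \<in> t"
      using assms(2) by blast
    moreover from this have "f x \<in> img t"
      using assms(3) by blast
    ultimately show "x \<in> \<Union>{t\<in>T. img t \<inter> A \<noteq> {}}"
      using x by blast
  qed
  also have "\<dots> \<subseteq> pre_sharp up img T A"
    using assms(2) by (intro Union_meeting_subset_pre_sharp[OF assms(1)]) simp
  finally show ?thesis .
qed

lemma pre_flat_subset_vimage:
  assumes "is_abstraction M up" and "\<Union>T = space M" and "\<forall>t\<in>T. f ` t \<subseteq> img t"
    and "f \<in> space M \<rightarrow> space N"
  shows "pre_flat M N up img T A \<subseteq> {x \<in> space M. f x \<in> A}"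
  using vimage_subset_pre_sharp[OF assms(1-3), of "space N - A"] assms(4)
  unfolding pre_flat_def by blast

lemma mu_out_le_mu_sharp:
  assumes "finite_measure M" and "is_abstraction M up" and "\<Union>T = space M"
    and "\<forall>t\<in>T. f ` t \<subseteq> img t"
  shows "mu_out M f A \<le> mu_sharp M up img T A"
  unfolding mu_out_def mu_sharp_def
  using assms(2-4)
  by (intro finite_measure.finite_measure_mono[OF assms(1)] vimage_subset_pre_sharp
      pre_sharp_in_sets) simp_all

lemma mu_flat_le_mu_out:
  assumes "finite_measure M" and "f \<in> measurable M N" and "A \<in> sets N"
    and "is_abstraction M up" and "\<Union>T = space M" and "\<forall>t\<in>T. f ` t \<subseteq> img t"
  shows "mu_flat M N up img T A \<le> mu_out M f A"
proof -
  have "{x \<in> space M. f x \<in> A} = f -` A \<inter> space M"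
    by blast
  then have "{x \<in> space M. f x \<in> A} \<in> sets M"
    using measurable_sets[OF assms(2,3)] by simp
  moreover have "f \<in> space M \<rightarrow> space N"
    using measurable_space[OF assms(2)] by blast
  ultimately show ?thesis
    unfolding mu_flat_def mu_out_def
    using assms(4-6)
    by (intro finite_measure.finite_measure_mono[OF assms(1)] pre_flat_subset_vimage)
qed

lemma mu_flat_eq_one_minus_mu_sharp_compl:
  assumes "prob_space M" and "is_abstraction M up" and "\<Union>T \<subseteq> space M"
  shows "mu_flat M N up img T A = 1 - mu_sharp M up img T (space N - A)"
  unfolding mu_flat_def mu_sharp_def pre_flat_def
  using prob_space.prob_compl[OF assms(1) pre_sharp_in_sets[OF assms(2,3)]] .

lemma mu_sharp_mono:
  assumes "finite_measure M" and "is_abstraction M up" and "mono_abstraction M up"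
    and "\<Union>T \<subseteq> space M" and "A \<subseteq> B"
  shows "mu_sharp M up img T A \<le> mu_sharp M up img T B"
  unfolding mu_sharp_def
  by (rule finite_measure.finite_measure_mono[OF assms(1) pre_sharp_mono[OF assms(3-5)]
        pre_sharp_in_sets[OF assms(2,4)]])

lemma mu_flat_mono:
  assumes "finite_measure M" and "is_abstraction M up" and "mono_abstraction M up"
    and "\<Union>T \<subseteq> space M" and "A \<subseteq> B"
  shows "mu_flat M N up img T A \<le> mu_flat M N up img T B"
  unfolding mu_flat_def
  by (rule finite_measure.finite_measure_mono[OF assms(1) pre_flat_mono[OF assms(3-5)]
        pre_flat_in_sets[OF assms(2,4)]])

theorem theorem3:
  fixes M :: "'a measure" and N :: "'b measure" and f :: "'a \<Rightarrow> 'b"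
    and img :: "'a set \<Rightarrow> 'b set" and T :: "'a set set" and up :: "'a set \<Rightarrow> 'a set"
  assumes "prob_space M"
    and "f \<in> measurable M N"
    and "\<forall>S. S \<subseteq> space M \<longrightarrow> f ` S \<subseteq> img S"
    and "finite T" and "is_partition (space M) T"
    and "is_abstraction M up" and "mono_abstraction M up"
  shows "(\<forall>A \<in> sets N. mu_flat M N up img T A \<le> mu_out M f A
                       \<and> mu_out M f A \<le> mu_sharp M up img T A)
       \<and> (\<forall>A \<in> sets N. mu_flat M N up img T A = 1 - mu_sharp M up img T (space N - A))
       \<and> (\<forall>A B. A \<subseteq> B \<and> B \<subseteq> space N \<longrightarrow>
              mu_flat M N up img T A \<le> mu_flat M N up img T B
            \<and> mu_sharp M up img T A \<le> mu_sharp M up img T B)"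
proof -
  have finite: "finite_measure M"
    using assms(1) by (rule prob_space.axioms)
  have cover: "\<Union>T = space M"
    using assms(5) by (simp add: is_partition_def)
  have img_over: "\<forall>t\<in>T. f ` t \<subseteq> img t"
    using assms(3) cover by blast
  have cover_sub: "\<Union>T \<subseteq> space M"
    using cover by simp
  show ?thesis
  proof (intro conjI ballI allI impI)
    fix A assume A: "A \<in> sets N"
    show "mu_flat M N up img T A \<le> mu_out M f A"
      by (rule mu_flat_le_mu_out[OF finite assms(2) A assms(6) cover img_over])
    show "mu_out M f A \<le> mu_sharp M up img T A"
      by (rule mu_out_le_mu_sharp[OF finite assms(6) cover img_over])
    show "mu_flat M N up img T A = 1 - mu_sharp M up img T (space N - A)"
      by (rule mu_flat_eq_one_minus_mu_sharp_compl[OF assms(1,6) cover_sub])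
  next
    fix A B :: "'b set" assume "A \<subseteq> B \<and> B \<subseteq> space N"
    then have AB: "A \<subseteq> B" by simp
    show "mu_flat M N up img T A \<le> mu_flat M N up img T B"
      by (rule mu_flat_mono[OF finite assms(6,7) cover_sub AB])
    show "mu_sharp M up img T A \<le> mu_sharp M up img T B"
      by (rule mu_sharp_mono[OF finite assms(6,7) cover_sub AB])
  qed
qed

end
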